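(* Let $(V,L,\varphi,E)$ be a valuation system. Suppose there exist a sublattice $C$ of $V$ and a valuation $\psi:C\to E$ such that $\psi$ extends $\varphi$ and $(V,C,\psi,E)$ is complete. Then there is a sublattice $\overline L$ of $V$ and a valuation $\overline\varphi:\overline L\to E$ such that $\overline\varphi$ extends $\varphi$, $(V,\overline L,\overline\varphi,E)$ is complete, and $\psi'$ extends $\overline\varphi$ for every sublattice $C'$ of $V$ and every valuation $\psi':C'\to E$ that extends $\varphi$ and for which $(V,C',\psi',E)$ is complete. Moreover, $\varphi$ is $\Pi_\xi$-extendible and $\overline\varphi=\Pi_\xi\varphi$ for some ordinal number $\xi$.
   Context: A valuation system $(V,L,\varphi,E)$ consists of: (i) a lattice $V$ which is $\sigma$-distributive, i.e. for every $a\in V$ and every sequence $(b_n)$ in $V$ whose infimum exists, $\bigwedge_n(a\vee b_n)$ exists and equals $a\vee\bigwedge_n b_n$, and dually whenever $\bigvee_n b_n$ exists, $\bigvee_n(a\wedge b_n)$ exists and equals $a\wedge\bigvee_n b_n$; (ii) a sublattice $L$ of $V$; (iii) a partially ordered abelian group $E$ which is R-complete: whenever $x_1\ge x_2\ge\cdots$ and $y_1\ge y_2\ge\cdots$ in $E$ are such that $\bigwedge_n(x_n+y_n)$ exists, then $\bigwedge_n x_n$ and $\bigwedge_n y_n$ exist, and dually for increasing sequences and suprema; (iv) a valuation $\varphi:L\to E$, i.e. an order-preserving map with $\varphi(a\wedge b)+\varphi(a\vee b)=\varphi(a)+\varphi(b)$. A map $\psi:C\to E$ extends $\varphi:L\to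 E$ if $L\subseteq C$ and $\psi|_L=\varphi$. A decreasing sequence $(a_n)$ in $L$ is $\varphi$-convergent if $\bigwedge_n a_n$ exists in $V$ and $\bigwedge_n\varphi(a_n)$ exists in $E$; an increasing sequence $(a_n)$ is $\varphi$-convergent if $\bigvee_n a_n$ exists in $V$ and $\bigvee_n\varphi(a_n)$ exists in $E$. The system is $\Pi$-complete if for every $\varphi$-convergent decreasing $(a_n)$ in $L$, $\bigwedge_n a_n\in L$ and $\varphi(\bigwedge_n a_n)=\bigwedge_n\varphi(a_n)$; $\Sigma$-complete dually with increasing sequences and suprema; complete if both. $\Pi L:=\{\bigwedge_n a_n:(a_n)\ \varphi\text{-convergent decreasing in }L\}$, and $\varphi$ is $\Pi$-extendible if there is a valuation $\Pi\varphi:\Pi L\to E$ with $\Pi\varphi(\bigwedge_n a_n)=\bigwedge_n\varphi(a_n)$ for all such sequences; $\Sigma L$, $\Sigma$-extendible and $\Sigma\varphi$ are defined dually. The hierarchy is defined by transfinite recursion: $\varphi$ is $\Pi_0$- and $\Sigma_0$-extendible with $\Pi_0\varphi=\Sigma_0\varphi=\varphi$ (on $\Pi_0L=\Sigma_0L=L$); $\varphi$ is $\Pi_{\alpha+1}$-extendible iff $\varphi$ is $\Sigma_\alpha$-extendible and $\Sigma_\alpha\varphi$ is $\Pi$-extendible, and then $\Pi_{\alpha+1}L=\Pi(\Sigma_\alpha L)$, $\Pi_{\alpha+1}\varphi=\Pi(\Sigma_\alpha\varphi)$; $\varphi$ is $\Sigma_{\alpha+1}$-extendible iff $\varphi$ is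 $\Pi_\alpha$-extendible and $\Pi_\alpha\varphi$ is $\Sigma$-extendible, and then $\Sigma_{\alpha+1}L=\Sigma(\Pi_\alpha L)$, $\Sigma_{\alpha+1}\varphi=\Sigma(\Pi_\alpha\varphi)$; for a limit ordinal $\lambda$, $\varphi$ is $\Pi_\lambda$-extendible iff it is $\Pi_\alpha$-extendible for all $\alpha<\lambda$, and then $\Pi_\lambda L=\bigcup_{\alpha<\lambda}\Pi_\alpha L$ and $\Pi_\lambda\varphi(c)=\Pi_\beta\varphi(c)$ for $c\in\Pi_\beta L$, $\beta<\lambda$; similarly for $\Sigma_\lambda$. *)

theory Defs
  imports Main
begin

definition is_inf_seq :: "(nat \<Rightarrow> 'a::order) \<Rightarrow> 'a \<Rightarrow> bool" where
  "is_inf_seq a x \<longleftrightarrow> (\<forall>n. x \<le> a n) \<and> (\<forall>y. (\<forall>n. y \<le> a n) \<longrightarrow> y \<le> x)"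

definition is_sup_seq :: "(nat \<Rightarrow> 'a::order) \<Rightarrow> 'a \<Rightarrow> bool" where
  "is_sup_seq a x \<longleftrightarrow> (\<forall>n. a n \<le> x) \<and> (\<forall>y. (\<forall>n. a n \<le> y) \<longrightarrow> x \<le> y)"

definition has_inf_seq :: "(nat \<Rightarrow> 'a::order) \<Rightarrow> bool" where
  "has_inf_seq a \<longleftrightarrow> (\<exists>x. is_inf_seq a x)"

definition has_sup_seq :: "(nat \<Rightarrow> 'a::order) \<Rightarrow> bool" where
  "has_sup_seq a \<longleftrightarrow> (\<exists>x. is_sup_seq a x)"

definition inf_seq :: "(nat \<Rightarrow> 'a::order) \<Rightarrow> 'a" where
  "inf_seq a = (THE x. is_inf_seq a x)"

definition sup_seq :: "(nat \<Rightarrow> 'a::order) \<Rightarrow> 'a" where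
  "sup_seq a = (THE x. is_sup_seq a x)"

text \<open>The lattice V is the whole type 'v. sigma-distributivity of V:\<close>
definition sigma_distributive :: "'v::lattice itself \<Rightarrow> bool" where
  "sigma_distributive _ \<longleftrightarrow>
     (\<forall>(a::'v) b. has_inf_seq b \<longrightarrow>
        has_inf_seq (\<lambda>n. sup a (b n)) \<and> inf_seq (\<lambda>n. sup a (b n)) = sup a (inf_seq b)) \<and>
     (\<forall>(a::'v) b. has_sup_seq b \<longrightarrow>
        has_sup_seq (\<lambda>n. inf a (b n)) \<and> sup_seq (\<lambda>n. inf a (b n)) = inf a (sup_seq b))"

definition R_complete :: "'e::ordered_ab_group_add itself \<Rightarrow> bool" where
  "R_complete _ \<longleftrightarrow>
     (\<forall>(x::nat \<Rightarrow> 'e) y. antimono x \<and> antimono y \<and> has_inf_seq (\<lambda>n. x n + y n) \<longrightarrow>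
        has_inf_seq x \<and> has_inf_seq y) \<and>
     (\<forall>(x::nat \<Rightarrow> 'e) y. mono x \<and> mono y \<and> has_sup_seq (\<lambda>n. x n + y n) \<longrightarrow>
        has_sup_seq x \<and> has_sup_seq y)"

definition sublattice :: "'v::lattice set \<Rightarrow> bool" where
  "sublattice L \<longleftrightarrow> (\<forall>a\<in>L. \<forall>b\<in>L. inf a b \<in> L \<and> sup a b \<in> L)"

text \<open>A valuation phi : L -> E (only the values on L matter).\<close>
definition valuation :: "'v::lattice set \<Rightarrow> ('v \<Rightarrow> 'e::ordered_ab_group_add) \<Rightarrow> bool" where
  "valuation L \<phi> \<longleftrightarrow>
     (\<forall>a\<in>L. \<forall>b\<in>L. a \<le> b \<longrightarrow> \<phi> a \<le> \<phi> b) \<and>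
     (\<forall>a\<in>L. \<forall>b\<in>L. \<phi> (inf a b) + \<phi> (sup a b) = \<phi> a + \<phi> b)"

definition valuation_system :: "'v::lattice set \<Rightarrow> ('v \<Rightarrow> 'e::ordered_ab_group_add) \<Rightarrow> bool" where
  "valuation_system L \<phi> \<longleftrightarrow>
     sigma_distributive TYPE('v) \<and> sublattice L \<and> R_complete TYPE('e) \<and> valuation L \<phi>"

definition extends :: "'v set \<Rightarrow> ('v \<Rightarrow> 'e) \<Rightarrow> 'v set \<Rightarrow> ('v \<Rightarrow> 'e) \<Rightarrow> bool" where
  "extends C \<psi> L \<phi> \<longleftrightarrow> L \<subseteq> C \<and> (\<forall>a\<in>L. \<psi> a = \<phi> a)"

definition conv_dec :: "'v::lattice set \<Rightarrow> ('v \<Rightarrow> 'e::ordered_ab_group_add) \<Rightarrow> (nat \<Rightarrow> 'v) \<Rightarrow> bool" where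
  "conv_dec L \<phi> a \<longleftrightarrow> (\<forall>n. a n \<in> L) \<and> antimono a \<and> has_inf_seq a \<and> has_inf_seq (\<lambda>n. \<phi> (a n))"

definition conv_inc :: "'v::lattice set \<Rightarrow> ('v \<Rightarrow> 'e::ordered_ab_group_add) \<Rightarrow> (nat \<Rightarrow> 'v) \<Rightarrow> bool" where
  "conv_inc L \<phi> a \<longleftrightarrow> (\<forall>n. a n \<in> L) \<and> mono a \<and> has_sup_seq a \<and> has_sup_seq (\<lambda>n. \<phi> (a n))"

definition Pi_complete :: "'v::lattice set \<Rightarrow> ('v \<Rightarrow> 'e::ordered_ab_group_add) \<Rightarrow> bool" where
  "Pi_complete L \<phi> \<longleftrightarrow>
     (\<forall>a. conv_dec L \<phi> a \<longrightarrow> inf_seq a \<in> L \<and> \<phi> (inf_seq a) = inf_seq (\<lambda>n. \<phi> (a n)))"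

definition Sigma_complete :: "'v::lattice set \<Rightarrow> ('v \<Rightarrow> 'e::ordered_ab_group_add) \<Rightarrow> bool" where
  "Sigma_complete L \<phi> \<longleftrightarrow>
     (\<forall>a. conv_inc L \<phi> a \<longrightarrow> sup_seq a \<in> L \<and> \<phi> (sup_seq a) = sup_seq (\<lambda>n. \<phi> (a n)))"

definition complete :: "'v::lattice set \<Rightarrow> ('v \<Rightarrow> 'e::ordered_ab_group_add) \<Rightarrow> bool" where
  "complete L \<phi> \<longleftrightarrow> Pi_complete L \<phi> \<and> Sigma_complete L \<phi>"

definition PiL :: "'v::lattice set \<Rightarrow> ('v \<Rightarrow> 'e::ordered_ab_group_add) \<Rightarrow> 'v set" where
  "PiL L \<phi> = {inf_seq a | a. conv_dec L \<phi> a}"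

definition SigmaL :: "'v::lattice set \<Rightarrow> ('v \<Rightarrow> 'e::ordered_ab_group_add) \<Rightarrow> 'v set" where
  "SigmaL L \<phi> = {sup_seq a | a. conv_inc L \<phi> a}"

definition is_Pi_ext :: "'v::lattice set \<Rightarrow> ('v \<Rightarrow> 'e::ordered_ab_group_add) \<Rightarrow> ('v \<Rightarrow> 'e) \<Rightarrow> bool" where
  "is_Pi_ext L \<phi> \<psi> \<longleftrightarrow> valuation (PiL L \<phi>) \<psi> \<and>
     (\<forall>a. conv_dec L \<phi> a \<longrightarrow> \<psi> (inf_seq a) = inf_seq (\<lambda>n. \<phi> (a n)))"

definition is_Sigma_ext :: "'v::lattice set \<Rightarrow> ('v \<Rightarrow> 'e::ordered_ab_group_add) \<Rightarrow> ('v \<Rightarrow> 'e) \<Rightarrow> bool" where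
  "is_Sigma_ext L \<phi> \<psi> \<longleftrightarrow> valuation (SigmaL L \<phi>) \<psi> \<and>
     (\<forall>a. conv_inc L \<phi> a \<longrightarrow> \<psi> (sup_seq a) = sup_seq (\<lambda>n. \<phi> (a n)))"

definition Pi_extendible :: "'v::lattice set \<Rightarrow> ('v \<Rightarrow> 'e::ordered_ab_group_add) \<Rightarrow> bool" where
  "Pi_extendible L \<phi> \<longleftrightarrow> (\<exists>\<psi>. is_Pi_ext L \<phi> \<psi>)"

definition Sigma_extendible :: "'v::lattice set \<Rightarrow> ('v \<Rightarrow> 'e::ordered_ab_group_add) \<Rightarrow> bool" where
  "Sigma_extendible L \<phi> \<longleftrightarrow> (\<exists>\<psi>. is_Sigma_ext L \<phi> \<psi>)"

text \<open>The extension Pi phi (meaningful on PiL L phi when Pi-extendible; it is uniquely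
  determined there by its defining property).\<close>
definition Pi_fun :: "'v::lattice set \<Rightarrow> ('v \<Rightarrow> 'e::ordered_ab_group_add) \<Rightarrow> 'v \<Rightarrow> 'e" where
  "Pi_fun L \<phi> = (SOME \<psi>. is_Pi_ext L \<phi> \<psi>)"

definition Sigma_fun :: "'v::lattice set \<Rightarrow> ('v \<Rightarrow> 'e::ordered_ab_group_add) \<Rightarrow> 'v \<Rightarrow> 'e" where
  "Sigma_fun L \<phi> = (SOME \<psi>. is_Sigma_ext L \<phi> \<psi>)"

text \<open>Ordinals are represented by elements of the field of a well-order r: the element i
  stands for the order type of its strict initial segment underS r i.
  A stage records (Pi_alpha L, Pi_alpha phi, Pi_alpha-extendible,
                   Sigma_alpha L, Sigma_alpha phi, Sigma_alpha-extendible).\<close>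

record ('v, 'e) stage =
  PL :: "'v set"
  Pf :: "'v \<Rightarrow> 'e"
  Pok :: bool
  SL :: "'v set"
  Sf :: "'v \<Rightarrow> 'e"
  Sok :: bool

definition hier_step ::
  "'i rel \<Rightarrow> 'v::lattice set \<Rightarrow> ('v \<Rightarrow> 'e::ordered_ab_group_add)
    \<Rightarrow> ('i \<Rightarrow> ('v, 'e) stage) \<Rightarrow> 'i \<Rightarrow> ('v, 'e) stage" where
  "hier_step r L \<phi> F i =
    (if underS r i = {} then
       \<lparr>PL = L, Pf = \<phi>, Pok = True, SL = L, Sf = \<phi>, Sok = True\<rparr>
     else if (\<exists>j\<in>underS r i. underS r i = insert j (underS r j)) then
       (let j = (SOME j. j \<in> underS r i \<and> underS r i = insert j (underS r j)); s = F j in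
        \<lparr>PL = PiL (SL s) (Sf s), Pf = Pi_fun (SL s) (Sf s),
         Pok = (Sok s \<and> Pi_extendible (SL s) (Sf s)),
         SL = SigmaL (PL s) (Pf s), Sf = Sigma_fun (PL s) (Pf s),
         Sok = (Pok s \<and> Sigma_extendible (PL s) (Pf s))\<rparr>)
     else
       \<lparr>PL = (\<Union>j\<in>underS r i. PL (F j)),
        Pf = (\<lambda>c. Pf (F (SOME j. j \<in> underS r i \<and> c \<in> PL (F j))) c),
        Pok = (\<forall>j\<in>underS r i. Pok (F j)),
        SL = (\<Union>j\<in>underS r i. SL (F j)),
        Sf = (\<lambda>c. Sf (F (SOME j. j \<in> underS r i \<and> c \<in> SL (F j))) c),
        Sok = (\<forall>j\<in>underS r i. Sok (F j))\<rparr>)"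

definition hier :: "'i rel \<Rightarrow> 'v::lattice set \<Rightarrow> ('v \<Rightarrow> 'e::ordered_ab_group_add) \<Rightarrow> 'i \<Rightarrow> ('v, 'e) stage" where
  "hier r L \<phi> = wfrec (r - Id) (hier_step r L \<phi>)"

definition Pi_level_extendible :: "'i rel \<Rightarrow> 'i \<Rightarrow> 'v::lattice set \<Rightarrow> ('v \<Rightarrow> 'e::ordered_ab_group_add) \<Rightarrow> bool" where
  "Pi_level_extendible r i L \<phi> = Pok (hier r L \<phi> i)"

definition Pi_level_L :: "'i rel \<Rightarrow> 'i \<Rightarrow> 'v::lattice set \<Rightarrow> ('v \<Rightarrow> 'e::ordered_ab_group_add) \<Rightarrow> 'v set" where
  "Pi_level_L r i L \<phi> = PL (hier r L \<phi> i)"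

definition Pi_level_fun :: "'i rel \<Rightarrow> 'i \<Rightarrow> 'v::lattice set \<Rightarrow> ('v \<Rightarrow> 'e::ordered_ab_group_add) \<Rightarrow> 'v \<Rightarrow> 'e" where
  "Pi_level_fun r i L \<phi> = Pf (hier r L \<phi> i)"

end

(*
  Every complete extension psi : C -> E of phi contains all stages of the transfinite
  Pi/Sigma hierarchy of phi and agrees with them: a successor stage consists of limits of
  convergent monotone sequences from the previous one, which C absorbs by completeness, so
  psi itself witnesses extendibility. The valuation identity together with
  sigma-distributivity and R-completeness keeps every stage a sublattice.

  The Pi-part of the stage omega_1 is complete: a monotone sequence in it already lives in
  a single countable stage, so its limit appears at a later countable stage. Thus this
  stage is the least complete extension. For infinite V, omega_1 is realised in a
  well-order of the uncountably many subsets of V; for finite V, monotone sequences are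
  eventually constant and L itself is complete.
*)
theory Submission
  imports Defs "HOL-Library.Countable_Set"
begin

lemma is_inf_seq_unique: "is_inf_seq a x \<Longrightarrow> inf_seq a = x"
  unfolding inf_seq_def by (rule the_equality) (auto simp: is_inf_seq_def intro: order.antisym)

lemma is_sup_seq_unique: "is_sup_seq a x \<Longrightarrow> sup_seq a = x"
  unfolding sup_seq_def by (rule the_equality) (auto simp: is_sup_seq_def intro: order.antisym)

lemma has_inf_seqD: "has_inf_seq a \<Longrightarrow> is_inf_seq a (inf_seq a)"
  unfolding has_inf_seq_def using is_inf_seq_unique by metis

lemma has_sup_seqD: "has_sup_seq a \<Longrightarrow> is_sup_seq a (sup_seq a)"
  unfolding has_sup_seq_def using is_sup_seq_unique by metis

lemma is_inf_seq_const: "is_inf_seq (\<lambda>n. x) x"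
  by (simp add: is_inf_seq_def)

lemma is_sup_seq_const: "is_sup_seq (\<lambda>n. x) x"
  by (simp add: is_sup_seq_def)

lemma is_inf_seq_inf:
  "is_inf_seq a x \<Longrightarrow> is_inf_seq b y \<Longrightarrow> is_inf_seq (\<lambda>n. inf (a n) (b n)) (inf x (y::'a::lattice))"
  unfolding is_inf_seq_def by (auto intro: le_infI1 le_infI2)

lemma is_sup_seq_sup:
  "is_sup_seq a x \<Longrightarrow> is_sup_seq b y \<Longrightarrow> is_sup_seq (\<lambda>n. sup (a n) (b n)) (sup x (y::'a::lattice))"
  unfolding is_sup_seq_def by (auto intro: le_supI1 le_supI2)

lemma is_inf_seq_sup_left:
  fixes s :: "nat \<Rightarrow> 'v::lattice"
  assumes "sigma_distributive TYPE('v)" and "is_inf_seq s w"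
  shows "is_inf_seq (\<lambda>n. sup c (s n)) (sup c w)"
proof -
  have "has_inf_seq s" using assms(2) unfolding has_inf_seq_def by blast
  then have "has_inf_seq (\<lambda>n. sup c (s n)) \<and> inf_seq (\<lambda>n. sup c (s n)) = sup c (inf_seq s)"
    using assms(1) unfolding sigma_distributive_def by blast
  then show ?thesis using has_inf_seqD is_inf_seq_unique[OF assms(2)] by metis
qed

lemma is_sup_seq_inf_left:
  fixes s :: "nat \<Rightarrow> 'v::lattice"
  assumes "sigma_distributive TYPE('v)" and "is_sup_seq s w"
  shows "is_sup_seq (\<lambda>n. inf c (s n)) (inf c w)"
proof -
  have "has_sup_seq s" using assms(2) unfolding has_sup_seq_def by blast
  then have "has_sup_seq (\<lambda>n. inf c (s n)) \<and> sup_seq (\<lambda>n. inf c (s n)) = inf c (sup_seq s)"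
    using assms(1) unfolding sigma_distributive_def by blast
  then show ?thesis using has_sup_seqD is_sup_seq_unique[OF assms(2)] by metis
qed

lemma is_inf_seq_add_left:
  fixes s :: "nat \<Rightarrow> 'e::ordered_ab_group_add"
  assumes "is_inf_seq s w"
  shows "is_inf_seq (\<lambda>n. c + s n) (c + w)"
  unfolding is_inf_seq_def
proof (intro conjI allI impI)
  show "c + w \<le> c + s n" for n using assms unfolding is_inf_seq_def by (simp add: add_left_mono)
  fix z assume "\<forall>n. z \<le> c + s n"
  then have "\<forall>n. z - c \<le> s n" by (simp add: diff_le_eq add.commute)
  then have "z - c \<le> w" using assms unfolding is_inf_seq_def by blast
  then show "z \<le> c + w" by (simp add: diff_le_eq add.commute)
qed

lemma is_sup_seq_add_left:
  fixes s :: "nat \<Rightarrow> 'e::ordered_ab_group_add"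
  assumes "is_sup_seq s w"
  shows "is_sup_seq (\<lambda>n. c + s n) (c + w)"
  unfolding is_sup_seq_def
proof (intro conjI allI impI)
  show "c + s n \<le> c + w" for n using assms unfolding is_sup_seq_def by (simp add: add_left_mono)
  fix z assume "\<forall>n. c + s n \<le> z"
  then have "\<forall>n. s n \<le> z - c" by (simp add: le_diff_eq add.commute)
  then have "w \<le> z - c" using assms unfolding is_sup_seq_def by blast
  then show "c + w \<le> z" by (simp add: le_diff_eq add.commute)
qed

lemma is_inf_seq_antimono_binop:
  fixes f :: "'a::order \<Rightarrow> 'a \<Rightarrow> 'a"
  assumes comm: "\<And>x y. f x y = f y x"
    and mono: "\<And>x x' y y'. x \<le> x' \<Longrightarrow> y \<le> y' \<Longrightarrow> f x y \<le> f x' y'"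
    and cont: "\<And>c s w. is_inf_seq s w \<Longrightarrow> is_inf_seq (\<lambda>n. f c (s n)) (f c w)"
    and "antimono a" "antimono b" and a: "is_inf_seq a x" and b: "is_inf_seq b y"
  shows "is_inf_seq (\<lambda>n. f (a n) (b n)) (f x y)"
  unfolding is_inf_seq_def
proof (intro conjI allI impI)
  show "f x y \<le> f (a n) (b n)" for n
    using a b mono unfolding is_inf_seq_def by blast
next
  fix z assume z: "\<forall>n. z \<le> f (a n) (b n)"
  have "z \<le> f (b m) (a n)" for m n
  proof -
    have "z \<le> f (a (max n m)) (b (max n m))" using z by blast
    also have "\<dots> \<le> f (a n) (b m)"
      using \<open>antimono a\<close> \<open>antimono b\<close> by (intro mono) (auto simp: antimono_def)
    finally show ?thesis by (simp add: comm)
  qed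
  then have "z \<le> f x (b m)" for m
    using cont[OF a, of "b m"] comm unfolding is_inf_seq_def by metis
  then show "z \<le> f x y"
    using cont[OF b, of x] unfolding is_inf_seq_def by blast
qed

lemma is_sup_seq_mono_binop:
  fixes f :: "'a::order \<Rightarrow> 'a \<Rightarrow> 'a"
  assumes comm: "\<And>x y. f x y = f y x"
    and mono: "\<And>x x' y y'. x \<le> x' \<Longrightarrow> y \<le> y' \<Longrightarrow> f x y \<le> f x' y'"
    and cont: "\<And>c s w. is_sup_seq s w \<Longrightarrow> is_sup_seq (\<lambda>n. f c (s n)) (f c w)"
    and "mono a" "mono b" and a: "is_sup_seq a x" and b: "is_sup_seq b y"
  shows "is_sup_seq (\<lambda>n. f (a n) (b n)) (f x y)"
  unfolding is_sup_seq_def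
proof (intro conjI allI impI)
  show "f (a n) (b n) \<le> f x y" for n
    using a b mono unfolding is_sup_seq_def by blast
next
  fix z assume z: "\<forall>n. f (a n) (b n) \<le> z"
  have "f (b m) (a n) \<le> z" for m n
  proof -
    have "f (b m) (a n) = f (a n) (b m)" by (simp add: comm)
    also have "\<dots> \<le> f (a (max n m)) (b (max n m))"
      using \<open>mono a\<close> \<open>mono b\<close> by (intro mono) (auto simp: mono_def)
    also have "\<dots> \<le> z" using z by blast
    finally show ?thesis .
  qed
  then have "f x (b m) \<le> z" for m
    using cont[OF a, of "b m"] comm unfolding is_sup_seq_def by metis
  then show "f x y \<le> z"
    using cont[OF b, of x] unfolding is_sup_seq_def by blast
qed

lemma is_inf_seq_sup:
  fixes a b :: "nat \<Rightarrow> 'v::lattice"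
  assumes "sigma_distributive TYPE('v)" "antimono a" "antimono b" "is_inf_seq a x" "is_inf_seq b y"
  shows "is_inf_seq (\<lambda>n. sup (a n) (b n)) (sup x y)"
  by (rule is_inf_seq_antimono_binop[of sup, OF sup_commute sup_mono
        is_inf_seq_sup_left[OF assms(1)] assms(2-)])

lemma is_sup_seq_inf:
  fixes a b :: "nat \<Rightarrow> 'v::lattice"
  assumes "sigma_distributive TYPE('v)" "mono a" "mono b" "is_sup_seq a x" "is_sup_seq b y"
  shows "is_sup_seq (\<lambda>n. inf (a n) (b n)) (inf x y)"
  by (rule is_sup_seq_mono_binop[of inf, OF inf_commute inf_mono
        is_sup_seq_inf_left[OF assms(1)] assms(2-)])

lemma is_inf_seq_add:
  fixes a b :: "nat \<Rightarrow> 'e::ordered_ab_group_add"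
  assumes "antimono a" "antimono b" "is_inf_seq a x" "is_inf_seq b y"
  shows "is_inf_seq (\<lambda>n. a n + b n) (x + y)"
  by (rule is_inf_seq_antimono_binop[of "(+)"])
    (simp_all add: add.commute add_mono is_inf_seq_add_left assms)

lemma is_sup_seq_add:
  fixes a b :: "nat \<Rightarrow> 'e::ordered_ab_group_add"
  assumes "mono a" "mono b" "is_sup_seq a x" "is_sup_seq b y"
  shows "is_sup_seq (\<lambda>n. a n + b n) (x + y)"
  by (rule is_sup_seq_mono_binop[of "(+)"])
    (simp_all add: add.commute add_mono is_sup_seq_add_left assms)

section \<open>\<Pi>- and \<Sigma>-closures\<close>

lemma valuation_subset: "valuation C \<psi> \<Longrightarrow> S \<subseteq> C \<Longrightarrow> valuation S \<psi>"
  unfolding valuation_def by blast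

lemma valuation_antimono_seq:
  "valuation S \<psi> \<Longrightarrow> (\<forall>n. a n \<in> S) \<Longrightarrow> antimono a \<Longrightarrow> antimono (\<lambda>n. \<psi> (a n))"
  unfolding valuation_def antimono_def by blast

lemma valuation_mono_seq:
  "valuation S \<psi> \<Longrightarrow> (\<forall>n. a n \<in> S) \<Longrightarrow> mono a \<Longrightarrow> mono (\<lambda>n. \<psi> (a n))"
  unfolding valuation_def mono_def by blast

lemma PiL_I: "conv_dec S \<psi> a \<Longrightarrow> is_inf_seq a x \<Longrightarrow> x \<in> PiL S \<psi>"
  unfolding PiL_def using is_inf_seq_unique by blast

lemma SigmaL_I: "conv_inc S \<psi> a \<Longrightarrow> is_sup_seq a x \<Longrightarrow> x \<in> SigmaL S \<psi>"
  unfolding SigmaL_def using is_sup_seq_unique by blast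

text \<open>The valuation identity gives the pointwise meet and join of two convergent sequences
  a convergent sum of values; R-completeness then makes each of them convergent.\<close>

lemma PiL_sublattice:
  fixes S :: "'v::lattice set" and \<psi> :: "'v \<Rightarrow> 'e::ordered_ab_group_add"
  assumes sd: "sigma_distributive TYPE('v)" and rc: "R_complete TYPE('e)"
    and S: "sublattice S" and val: "valuation S \<psi>"
  shows "sublattice (PiL S \<psi>)"
  unfolding sublattice_def
proof (intro ballI conjI)
  fix c d assume "c \<in> PiL S \<psi>" "d \<in> PiL S \<psi>"
  then obtain a b where a: "conv_dec S \<psi> a" "c = inf_seq a" and b: "conv_dec S \<psi> b" "d = inf_seq b"
    unfolding PiL_def by blast
  define u where "u n = inf (a n) (b n)" for n
  define w where "w n = sup (a n) (b n)" for n
  have aS: "\<forall>n. a n \<in> S" and bS: "\<forall>n. b n \<in> S" and "antimono a" "antimono b"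
    using a b unfolding conv_dec_def by auto
  have uS: "\<forall>n. u n \<in> S" and wS: "\<forall>n. w n \<in> S"
    using aS bS S unfolding sublattice_def u_def w_def by auto
  have "antimono u" "antimono w"
    using \<open>antimono a\<close> \<open>antimono b\<close> unfolding u_def w_def antimono_def by (meson inf_mono sup_mono)+
  have ia: "is_inf_seq a c" and ib: "is_inf_seq b d"
    using a b has_inf_seqD unfolding conv_dec_def by blast+
  have iu: "is_inf_seq u (inf c d)"
    unfolding u_def by (rule is_inf_seq_inf[OF ia ib])
  have iw: "is_inf_seq w (sup c d)"
    unfolding w_def by (rule is_inf_seq_sup[OF sd \<open>antimono a\<close> \<open>antimono b\<close> ia ib])
  have "is_inf_seq (\<lambda>n. \<psi> (a n) + \<psi> (b n)) (inf_seq (\<lambda>n. \<psi> (a n)) + inf_seq (\<lambda>n. \<psi> (b n)))"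
    using a b valuation_antimono_seq[OF val] has_inf_seqD unfolding conv_dec_def
    by (intro is_inf_seq_add) blast+
  moreover have "\<psi> (a n) + \<psi> (b n) = \<psi> (u n) + \<psi> (w n)" for n
    using val aS bS unfolding valuation_def u_def w_def by auto
  ultimately have "has_inf_seq (\<lambda>n. \<psi> (u n) + \<psi> (w n))"
    unfolding has_inf_seq_def by auto
  then have "has_inf_seq (\<lambda>n. \<psi> (u n)) \<and> has_inf_seq (\<lambda>n. \<psi> (w n))"
    using rc valuation_antimono_seq[OF val uS \<open>antimono u\<close>] valuation_antimono_seq[OF val wS \<open>antimono w\<close>]
    unfolding R_complete_def by blast
  then have "conv_dec S \<psi> u" "conv_dec S \<psi> w"
    using uS wS \<open>antimono u\<close> \<open>antimono w\<close> iu iw unfolding conv_dec_def has_inf_seq_def by blast+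
  then show "inf c d \<in> PiL S \<psi>" "sup c d \<in> PiL S \<psi>"
    using iu iw by (blast intro: PiL_I)+
qed

lemma SigmaL_sublattice:
  fixes S :: "'v::lattice set" and \<psi> :: "'v \<Rightarrow> 'e::ordered_ab_group_add"
  assumes sd: "sigma_distributive TYPE('v)" and rc: "R_complete TYPE('e)"
    and S: "sublattice S" and val: "valuation S \<psi>"
  shows "sublattice (SigmaL S \<psi>)"
  unfolding sublattice_def
proof (intro ballI conjI)
  fix c d assume "c \<in> SigmaL S \<psi>" "d \<in> SigmaL S \<psi>"
  then obtain a b where a: "conv_inc S \<psi> a" "c = sup_seq a" and b: "conv_inc S \<psi> b" "d = sup_seq b"
    unfolding SigmaL_def by blast
  define u where "u n = inf (a n) (b n)" for n
  define w where "w n = sup (a n) (b n)" for n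
  have aS: "\<forall>n. a n \<in> S" and bS: "\<forall>n. b n \<in> S" and "mono a" "mono b"
    using a b unfolding conv_inc_def by auto
  have uS: "\<forall>n. u n \<in> S" and wS: "\<forall>n. w n \<in> S"
    using aS bS S unfolding sublattice_def u_def w_def by auto
  have "mono u" "mono w"
    using \<open>mono a\<close> \<open>mono b\<close> unfolding u_def w_def mono_def by (meson inf_mono sup_mono)+
  have ia: "is_sup_seq a c" and ib: "is_sup_seq b d"
    using a b has_sup_seqD unfolding conv_inc_def by blast+
  have iu: "is_sup_seq u (inf c d)"
    unfolding u_def by (rule is_sup_seq_inf[OF sd \<open>mono a\<close> \<open>mono b\<close> ia ib])
  have iw: "is_sup_seq w (sup c d)"
    unfolding w_def by (rule is_sup_seq_sup[OF ia ib])
  have "is_sup_seq (\<lambda>n. \<psi> (a n) + \<psi> (b n)) (sup_seq (\<lambda>n. \<psi> (a n)) + sup_seq (\<lambda>n. \<psi> (b n)))"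
    using a b valuation_mono_seq[OF val] has_sup_seqD unfolding conv_inc_def
    by (intro is_sup_seq_add) blast+
  moreover have "\<psi> (a n) + \<psi> (b n) = \<psi> (u n) + \<psi> (w n)" for n
    using val aS bS unfolding valuation_def u_def w_def by auto
  ultimately have "has_sup_seq (\<lambda>n. \<psi> (u n) + \<psi> (w n))"
    unfolding has_sup_seq_def by auto
  then have "has_sup_seq (\<lambda>n. \<psi> (u n)) \<and> has_sup_seq (\<lambda>n. \<psi> (w n))"
    using rc valuation_mono_seq[OF val uS \<open>mono u\<close>] valuation_mono_seq[OF val wS \<open>mono w\<close>]
    unfolding R_complete_def by blast
  then have "conv_inc S \<psi> u" "conv_inc S \<psi> w"
    using uS wS \<open>mono u\<close> \<open>mono w\<close> iu iw unfolding conv_inc_def has_sup_seq_def by blast+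
  then show "inf c d \<in> SigmaL S \<psi>" "sup c d \<in> SigmaL S \<psi>"
    using iu iw by (blast intro: SigmaL_I)+
qed

lemma conv_dec_transfer:
  "conv_dec S f a \<Longrightarrow> S \<subseteq> S' \<Longrightarrow> \<forall>x\<in>S. f x = g x \<Longrightarrow> conv_dec S' g a"
  unfolding conv_dec_def by auto

lemma conv_inc_transfer:
  "conv_inc S f a \<Longrightarrow> S \<subseteq> S' \<Longrightarrow> \<forall>x\<in>S. f x = g x \<Longrightarrow> conv_inc S' g a"
  unfolding conv_inc_def by auto

lemma PiL_mono: "S \<subseteq> S' \<Longrightarrow> \<forall>x\<in>S. f x = g x \<Longrightarrow> PiL S f \<subseteq> PiL S' g"
  unfolding PiL_def using conv_dec_transfer by blast

lemma SigmaL_mono: "S \<subseteq> S' \<Longrightarrow> \<forall>x\<in>S. f x = g x \<Longrightarrow> SigmaL S f \<subseteq> SigmaL S' g"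
  unfolding SigmaL_def using conv_inc_transfer by blast

lemma PiL_cong: "\<forall>x\<in>S. f x = g x \<Longrightarrow> PiL S f = PiL S g"
  using PiL_mono[of S S f g] PiL_mono[of S S g f] by auto

lemma SigmaL_cong: "\<forall>x\<in>S. f x = g x \<Longrightarrow> SigmaL S f = SigmaL S g"
  using SigmaL_mono[of S S f g] SigmaL_mono[of S S g f] by auto

lemma subset_PiL: "S \<subseteq> PiL S f"
proof
  fix x assume "x \<in> S"
  then have "conv_dec S f (\<lambda>n. x)"
    unfolding conv_dec_def has_inf_seq_def using is_inf_seq_const[of x] is_inf_seq_const[of "f x"] by (auto simp: antimono_def)
  then show "x \<in> PiL S f" by (rule PiL_I[OF _ is_inf_seq_const])
qed

lemma subset_SigmaL: "S \<subseteq> SigmaL S f"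
proof
  fix x assume "x \<in> S"
  then have "conv_inc S f (\<lambda>n. x)"
    unfolding conv_inc_def has_sup_seq_def using is_sup_seq_const[of x] is_sup_seq_const[of "f x"] by (auto simp: mono_def)
  then show "x \<in> SigmaL S f" by (rule SigmaL_I[OF _ is_sup_seq_const])
qed

lemma Pi_complete_extension:
  assumes cpl: "Pi_complete C \<psi>" and val: "valuation C \<psi>" and "S \<subseteq> C" and agree: "\<forall>x\<in>S. f x = \<psi> x"
  shows "PiL S f \<subseteq> C" and "Pi_extendible S f" and "\<forall>c\<in>PiL S f. Pi_fun S f c = \<psi> c"
proof -
  have lim: "inf_seq a \<in> C \<and> \<psi> (inf_seq a) = inf_seq (\<lambda>n. f (a n))" if "conv_dec S f a" for a
  proof -
    have "conv_dec C \<psi> a" using that conv_dec_transfer assms(3) agree by blast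
    moreover have "f (a n) = \<psi> (a n)" for n using that agree unfolding conv_dec_def by auto
    ultimately show ?thesis using cpl unfolding Pi_complete_def by auto
  qed
  then show "PiL S f \<subseteq> C" unfolding PiL_def by blast
  then have ext: "is_Pi_ext S f \<psi>"
    unfolding is_Pi_ext_def using valuation_subset[OF val] lim by blast
  then show "Pi_extendible S f" unfolding Pi_extendible_def by blast
  then have "is_Pi_ext S f (Pi_fun S f)"
    unfolding Pi_fun_def Pi_extendible_def by (rule someI_ex)
  with ext show "\<forall>c\<in>PiL S f. Pi_fun S f c = \<psi> c"
    unfolding is_Pi_ext_def PiL_def by auto
qed

lemma Sigma_complete_extension:
  assumes cpl: "Sigma_complete C \<psi>" and val: "valuation C \<psi>" and "S \<subseteq> C" and agree: "\<forall>x\<in>S. f x = \<psi> x"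
  shows "SigmaL S f \<subseteq> C" and "Sigma_extendible S f" and "\<forall>c\<in>SigmaL S f. Sigma_fun S f c = \<psi> c"
proof -
  have lim: "sup_seq a \<in> C \<and> \<psi> (sup_seq a) = sup_seq (\<lambda>n. f (a n))" if "conv_inc S f a" for a
  proof -
    have "conv_inc C \<psi> a" using that conv_inc_transfer assms(3) agree by blast
    moreover have "f (a n) = \<psi> (a n)" for n using that agree unfolding conv_inc_def by auto
    ultimately show ?thesis using cpl unfolding Sigma_complete_def by auto
  qed
  then show "SigmaL S f \<subseteq> C" unfolding SigmaL_def by blast
  then have ext: "is_Sigma_ext S f \<psi>"
    unfolding is_Sigma_ext_def using valuation_subset[OF val] lim by blast
  then show "Sigma_extendible S f" unfolding Sigma_extendible_def by blast
  then have "is_Sigma_ext S f (Sigma_fun S f)"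
    unfolding Sigma_fun_def Sigma_extendible_def by (rule someI_ex)
  with ext show "\<forall>c\<in>SigmaL S f. Sigma_fun S f c = \<psi> c"
    unfolding is_Sigma_ext_def SigmaL_def by auto
qed

section \<open>Stages of the hierarchy\<close>

definition initial_stage :: "'v set \<Rightarrow> ('v \<Rightarrow> 'e) \<Rightarrow> ('v, 'e) stage" where
  "initial_stage L \<phi> = \<lparr>PL = L, Pf = \<phi>, Pok = True, SL = L, Sf = \<phi>, Sok = True\<rparr>"

definition succ_stage :: "('v::lattice, 'e::ordered_ab_group_add) stage \<Rightarrow> ('v, 'e) stage" where
  "succ_stage s =
    \<lparr>PL = PiL (SL s) (Sf s), Pf = Pi_fun (SL s) (Sf s),
     Pok = (Sok s \<and> Pi_extendible (SL s) (Sf s)),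
     SL = SigmaL (PL s) (Pf s), Sf = Sigma_fun (PL s) (Pf s),
     Sok = (Pok s \<and> Sigma_extendible (PL s) (Pf s))\<rparr>"

definition union_stage :: "'i set \<Rightarrow> ('i \<Rightarrow> ('v, 'e) stage) \<Rightarrow> ('v, 'e) stage \<Rightarrow> bool" where
  "union_stage J H t \<longleftrightarrow>
     PL t = (\<Union>j\<in>J. PL (H j)) \<and> SL t = (\<Union>j\<in>J. SL (H j)) \<and>
     Pok t = (\<forall>j\<in>J. Pok (H j)) \<and> Sok t = (\<forall>j\<in>J. Sok (H j)) \<and>
     (\<forall>c\<in>PL t. \<exists>j\<in>J. c \<in> PL (H j) \<and> Pf t c = Pf (H j) c) \<and>
     (\<forall>c\<in>SL t. \<exists>j\<in>J. c \<in> SL (H j) \<and> Sf t c = Sf (H j) c)"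

text \<open>The last two conjuncts are what makes the hierarchy increasing.\<close>

definition stage_between ::
  "'v::lattice set \<Rightarrow> 'v set \<Rightarrow> ('v \<Rightarrow> 'e::ordered_ab_group_add) \<Rightarrow> ('v, 'e) stage \<Rightarrow> bool" where
  "stage_between L C \<psi> s \<longleftrightarrow> Pok s \<and> Sok s \<and>
     L \<subseteq> PL s \<and> L \<subseteq> SL s \<and> PL s \<subseteq> C \<and> SL s \<subseteq> C \<and>
     (\<forall>c\<in>PL s. Pf s c = \<psi> c) \<and> (\<forall>c\<in>SL s. Sf s c = \<psi> c) \<and>
     sublattice (PL s) \<and> sublattice (SL s) \<and>
     PL s \<subseteq> PiL (SL s) \<psi> \<and> SL s \<subseteq> SigmaL (PL s) \<psi>"

definition stage_precedes ::
  "('v::lattice \<Rightarrow> 'e::ordered_ab_group_add) \<Rightarrow> ('v, 'e) stage \<Rightarrow> ('v, 'e) stage \<Rightarrow> bool" where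
  "stage_precedes \<psi> s t \<longleftrightarrow> PiL (SL s) \<psi> \<subseteq> PL t \<and> SigmaL (PL s) \<psi> \<subseteq> SL t"

lemma stage_precedes_subsets:
  assumes "stage_between L C \<psi> s" and "stage_precedes \<psi> s t"
  shows "PL s \<subseteq> PL t" "SL s \<subseteq> SL t" "PL s \<subseteq> SL t" "SL s \<subseteq> PL t"
  using assms subset_PiL[of "SL s" \<psi>] subset_SigmaL[of "PL s" \<psi>]
  unfolding stage_between_def stage_precedes_def by blast+

lemma initial_stage_between:
  "sublattice L \<Longrightarrow> extends C \<psi> L \<phi> \<Longrightarrow> stage_between L C \<psi> (initial_stage L \<phi>)"
  using subset_PiL[of L \<psi>] subset_SigmaL[of L \<psi>]
  unfolding stage_between_def initial_stage_def extends_def by auto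

lemma succ_stage_sets:
  assumes "stage_between L C \<psi> s"
  shows "PL (succ_stage s) = PiL (SL s) \<psi>" and "SL (succ_stage s) = SigmaL (PL s) \<psi>"
  using assms PiL_cong[of "SL s" "Sf s" \<psi>] SigmaL_cong[of "PL s" "Pf s" \<psi>]
  unfolding stage_between_def succ_stage_def by simp_all

lemma succ_stage_between:
  fixes \<psi> :: "'v::lattice \<Rightarrow> 'e::ordered_ab_group_add"
  assumes sd: "sigma_distributive TYPE('v)" and rc: "R_complete TYPE('e)"
    and val: "valuation C \<psi>" and cpl: "complete C \<psi>" and s: "stage_between L C \<psi> s"
  shows "stage_between L C \<psi> (succ_stage s)" and "stage_precedes \<psi> s (succ_stage s)"
proof -
  have PC: "PL s \<subseteq> C" and SC: "SL s \<subseteq> C"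
    and Pf: "\<forall>c\<in>PL s. Pf s c = \<psi> c" and Sf: "\<forall>c\<in>SL s. Sf s c = \<psi> c"
    using s unfolding stage_between_def by auto
  note PL = succ_stage_sets(1)[OF s] and SL = succ_stage_sets(2)[OF s]
  note Pi = Pi_complete_extension[OF _ val SC Sf] and Sigma = Sigma_complete_extension[OF _ val PC Pf]
  have "PiL (SL s) \<psi> \<subseteq> PiL (SigmaL (PL s) \<psi>) \<psi>" "SigmaL (PL s) \<psi> \<subseteq> SigmaL (PiL (SL s) \<psi>) \<psi>"
    using s PiL_mono[of "SL s" "SigmaL (PL s) \<psi>" \<psi> \<psi>] SigmaL_mono[of "PL s" "PiL (SL s) \<psi>" \<psi> \<psi>]
    unfolding stage_between_def by simp_all
  moreover have "sublattice (PiL (SL s) \<psi>)" "sublattice (SigmaL (PL s) \<psi>)"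
    using s PiL_sublattice[OF sd rc _ valuation_subset[OF val SC]]
      SigmaL_sublattice[OF sd rc _ valuation_subset[OF val PC]]
    unfolding stage_between_def by simp_all
  moreover have "L \<subseteq> PiL (SL s) \<psi>" "L \<subseteq> SigmaL (PL s) \<psi>"
    using s subset_PiL[of "SL s" \<psi>] subset_SigmaL[of "PL s" \<psi>] unfolding stage_between_def by auto
  moreover have "Pok (succ_stage s)" "Sok (succ_stage s)"
    using s Pi(2) Sigma(2) cpl unfolding stage_between_def complete_def succ_stage_def by simp_all
  moreover have "\<forall>c\<in>PL (succ_stage s). Pf (succ_stage s) c = \<psi> c"
    "\<forall>c\<in>SL (succ_stage s). Sf (succ_stage s) c = \<psi> c"
    using Pi(3) Sigma(3) cpl unfolding complete_def succ_stage_def by simp_all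
  moreover have "PL (succ_stage s) \<subseteq> C" "SL (succ_stage s) \<subseteq> C"
    using Pi(1) Sigma(1) cpl unfolding complete_def succ_stage_def by simp_all
  ultimately show "stage_between L C \<psi> (succ_stage s)"
    unfolding stage_between_def PL SL by blast
  show "stage_precedes \<psi> s (succ_stage s)"
    unfolding stage_precedes_def PL SL by simp
qed

lemma stage_precedes_succ_stage:
  assumes s: "stage_between L C \<psi> s" and "stage_precedes \<psi> k s"
  shows "stage_precedes \<psi> k (succ_stage s)"
proof -
  have "PL s \<subseteq> PiL (SL s) \<psi>" "SL s \<subseteq> SigmaL (PL s) \<psi>"
    using s unfolding stage_between_def by simp_all
  then show ?thesis
    using assms(2) unfolding stage_precedes_def succ_stage_sets[OF s] by blast
qed

lemma sublattice_directed_Union: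
  assumes "\<And>A. A \<in> \<A> \<Longrightarrow> sublattice A"
    and "\<And>A B. A \<in> \<A> \<Longrightarrow> B \<in> \<A> \<Longrightarrow> \<exists>D\<in>\<A>. A \<union> B \<subseteq> D"
  shows "sublattice (\<Union>\<A>)"
  unfolding sublattice_def
proof (intro ballI)
  fix x y assume "x \<in> \<Union>\<A>" "y \<in> \<Union>\<A>"
  then obtain A B where "A \<in> \<A>" "B \<in> \<A>" "x \<in> A" "y \<in> B" by blast
  moreover obtain D where "D \<in> \<A>" "A \<union> B \<subseteq> D" using assms(2)[OF \<open>A \<in> \<A>\<close> \<open>B \<in> \<A>\<close>] by blast
  ultimately show "inf x y \<in> \<Union>\<A> \<and> sup x y \<in> \<Union>\<A>"
    using assms(1)[of D] unfolding sublattice_def by blast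
qed

lemma union_stage_between:
  assumes "J \<noteq> {}" and t: "union_stage J H t" and between: "\<forall>j\<in>J. stage_between L C \<psi> (H j)"
    and directed: "\<And>j1 j2. j1 \<in> J \<Longrightarrow> j2 \<in> J \<Longrightarrow>
      \<exists>m\<in>J. stage_precedes \<psi> (H j1) (H m) \<and> stage_precedes \<psi> (H j2) (H m)"
  shows "stage_between L C \<psi> t" and "\<forall>k\<in>J. stage_precedes \<psi> (H k) t" and "PL t = SL t"
proof -
  have PL: "PL t = (\<Union>j\<in>J. PL (H j))" and SL: "SL t = (\<Union>j\<in>J. SL (H j))"
    and Pok: "Pok t = (\<forall>j\<in>J. Pok (H j))" and Sok: "Sok t = (\<forall>j\<in>J. Sok (H j))"
    and Pf: "\<forall>c\<in>PL t. \<exists>j\<in>J. c \<in> PL (H j) \<and> Pf t c = Pf (H j) c"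
    and Sf: "\<forall>c\<in>SL t. \<exists>j\<in>J. c \<in> SL (H j) \<and> Sf t c = Sf (H j) c"
    using t unfolding union_stage_def by simp_all
  have Hj: "Pok (H j)" "Sok (H j)" "L \<subseteq> PL (H j)" "L \<subseteq> SL (H j)"
    "PL (H j) \<subseteq> C" "SL (H j) \<subseteq> C"
    "\<forall>c\<in>PL (H j). Pf (H j) c = \<psi> c" "\<forall>c\<in>SL (H j). Sf (H j) c = \<psi> c"
    if "j \<in> J" for j
    using between that unfolding stage_between_def by auto
  have up: "PL (H j) \<union> SL (H j) \<subseteq> PL (H m) \<inter> SL (H m)"
    if "j \<in> J" and "stage_precedes \<psi> (H j) (H m)" for j m
    using stage_precedes_subsets[OF between[rule_format, OF that(1)] that(2)] by blast
  have "sublattice (\<Union>j\<in>J. X (H j))" if X: "X = PL \<or> X = SL" for X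
  proof (rule sublattice_directed_Union)
    fix A assume "A \<in> (\<lambda>j. X (H j)) ` J"
    then obtain j where "j \<in> J" "A = X (H j)" by blast
    then show "sublattice A"
      using X between[rule_format, of j] unfolding stage_between_def by auto
  next
    fix A B assume "A \<in> (\<lambda>j. X (H j)) ` J" "B \<in> (\<lambda>j. X (H j)) ` J"
    then obtain j1 j2 where j12: "j1 \<in> J" "j2 \<in> J" and AB: "A = X (H j1)" "B = X (H j2)" by blast
    then obtain m where m: "m \<in> J" "stage_precedes \<psi> (H j1) (H m)" "stage_precedes \<psi> (H j2) (H m)"
      using directed by blast
    have "A \<union> B \<subseteq> X (H m)"
      using up[OF j12(1) m(2)] up[OF j12(2) m(3)] X unfolding AB by blast
    then show "\<exists>D\<in>(\<lambda>j. X (H j)) ` J. A \<union> B \<subseteq> D" using m(1) by blast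
  qed
  then have "sublattice (PL t)" "sublattice (SL t)"
    unfolding PL SL by blast+
  moreover show "PL t = SL t"
  proof -
    have "PL (H j) \<subseteq> SL t \<and> SL (H j) \<subseteq> PL t" if j: "j \<in> J" for j
    proof -
      obtain m where "m \<in> J" "stage_precedes \<psi> (H j) (H m)" using directed[OF j j] by blast
      then show ?thesis using up[OF j] unfolding PL SL by blast
    qed
    then show ?thesis by (auto simp: PL SL)
  qed
  then have "PL t \<subseteq> PiL (SL t) \<psi>" "SL t \<subseteq> SigmaL (PL t) \<psi>"
    using subset_PiL[of "SL t" \<psi>] subset_SigmaL[of "PL t" \<psi>] by simp_all
  moreover have "L \<subseteq> PL t" "L \<subseteq> SL t"
    using \<open>J \<noteq> {}\<close> Hj(3,4) unfolding PL SL by blast+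
  moreover have "PL t \<subseteq> C" "SL t \<subseteq> C"
    using Hj(5,6) unfolding PL SL by blast+
  moreover have "\<forall>c\<in>PL t. Pf t c = \<psi> c" "\<forall>c\<in>SL t. Sf t c = \<psi> c"
    using Pf Sf Hj(7,8) by fastforce+
  moreover have "Pok t" "Sok t"
    using Pok Sok Hj(1,2) by simp_all
  ultimately show "stage_between L C \<psi> t"
    unfolding stage_between_def by simp
  show "\<forall>k\<in>J. stage_precedes \<psi> (H k) t"
  proof
    fix k assume k: "k \<in> J"
    then obtain m where "m \<in> J" "stage_precedes \<psi> (H k) (H m)" using directed[OF k k] by blast
    then show "stage_precedes \<psi> (H k) t" unfolding stage_precedes_def PL SL by blast
  qed
qed

lemma union_stage_complete:
  fixes H :: "'i \<Rightarrow> ('v::lattice, 'e::ordered_ab_group_add) stage"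
  assumes cpl: "complete C \<psi>" and "J \<noteq> {}" and t: "union_stage J H t"
    and between: "\<forall>j\<in>J. stage_between L C \<psi> (H j)"
    and bounded: "\<And>f :: nat \<Rightarrow> 'i. \<forall>n. f n \<in> J \<Longrightarrow> \<exists>m\<in>J. \<forall>n. stage_precedes \<psi> (H (f n)) (H m)"
  shows "complete (PL t) \<psi>"
proof -
  have directed: "\<exists>m\<in>J. stage_precedes \<psi> (H j1) (H m) \<and> stage_precedes \<psi> (H j2) (H m)"
    if j12: "j1 \<in> J" "j2 \<in> J" for j1 j2
  proof -
    have "\<exists>m\<in>J. \<forall>n. stage_precedes \<psi> (H ((\<lambda>n::nat. if n = 0 then j1 else j2) n)) (H m)"
      by (rule bounded) (simp add: j12)
    then obtain m where "m \<in> J" and m: "\<forall>n::nat. stage_precedes \<psi> (H (if n = 0 then j1 else j2)) (H m)"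
      by auto
    then show ?thesis using spec[OF m, of 0] spec[OF m, of 1] by auto
  qed
  note union = union_stage_between[OF \<open>J \<noteq> {}\<close> t between directed]
  have PC: "PL t \<subseteq> C"
    using union(1) unfolding stage_between_def by simp
  have PL: "PL t = (\<Union>j\<in>J. PL (H j))" and SL: "SL t = (\<Union>j\<in>J. SL (H j))"
    using t unfolding union_stage_def by simp_all
  have above: "\<exists>m'\<in>J. stage_precedes \<psi> (H m) (H m')" if "m \<in> J" for m
    using bounded[of "\<lambda>n. m"] that by blast
  have seq: "\<exists>m\<in>J. \<forall>n. a n \<in> PL (H m) \<inter> SL (H m)"
    if a: "\<forall>n. a n \<in> PL t" for a :: "nat \<Rightarrow> 'v"
  proof -
    have "\<forall>n. \<exists>j. j \<in> J \<and> a n \<in> PL (H j)"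
      using a unfolding PL by blast
    then obtain j where j: "\<forall>n. j n \<in> J \<and> a n \<in> PL (H (j n))"
      by metis
    then obtain m where "m \<in> J" and prec: "\<forall>n. stage_precedes \<psi> (H (j n)) (H m)"
      using bounded[of j] by blast
    have "a n \<in> PL (H m) \<inter> SL (H m)" for n
    proof -
      have "stage_between L C \<psi> (H (j n))" using between j by blast
      then show ?thesis using stage_precedes_subsets(1,3)[OF _ spec[OF prec, of n]] j by blast
    qed
    then show ?thesis using \<open>m \<in> J\<close> by blast
  qed
  have "Pi_complete (PL t) \<psi>"
    unfolding Pi_complete_def
  proof (intro allI impI)
    fix a assume a: "conv_dec (PL t) \<psi> a"
    then obtain m where m: "m \<in> J" "\<forall>n. a n \<in> SL (H m)"
      using seq unfolding conv_dec_def by blast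
    then obtain m' where m': "m' \<in> J" "PiL (SL (H m)) \<psi> \<subseteq> PL (H m')"
      using above unfolding stage_precedes_def by blast
    have "conv_dec (SL (H m)) \<psi> a"
      using a m(2) unfolding conv_dec_def by blast
    then have "inf_seq a \<in> PiL (SL (H m)) \<psi>"
      unfolding PiL_def by blast
    then have "inf_seq a \<in> PL t" using m' unfolding PL by blast
    moreover have "conv_dec C \<psi> a" using conv_dec_transfer[OF a PC] by simp
    ultimately show "inf_seq a \<in> PL t \<and> \<psi> (inf_seq a) = inf_seq (\<lambda>n. \<psi> (a n))"
      using cpl unfolding complete_def Pi_complete_def by blast
  qed
  moreover have "Sigma_complete (PL t) \<psi>"
    unfolding Sigma_complete_def
  proof (intro allI impI)
    fix a assume a: "conv_inc (PL t) \<psi> a"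
    then obtain m where m: "m \<in> J" "\<forall>n. a n \<in> PL (H m)"
      using seq unfolding conv_inc_def by blast
    then obtain m' where m': "m' \<in> J" "SigmaL (PL (H m)) \<psi> \<subseteq> SL (H m')"
      using above unfolding stage_precedes_def by blast
    have "conv_inc (PL (H m)) \<psi> a"
      using a m(2) unfolding conv_inc_def by blast
    then have "sup_seq a \<in> SigmaL (PL (H m)) \<psi>"
      unfolding SigmaL_def by blast
    then have "sup_seq a \<in> SL t" using m' unfolding SL by blast
    then have "sup_seq a \<in> PL t" using union(3) by simp
    moreover have "conv_inc C \<psi> a" using conv_inc_transfer[OF a PC] by simp
    ultimately show "sup_seq a \<in> PL t \<and> \<psi> (sup_seq a) = sup_seq (\<lambda>n. \<psi> (a n))"
      using cpl unfolding complete_def Sigma_complete_def by blast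
  qed
  ultimately show ?thesis unfolding complete_def ..
qed

lemma Well_order_underS_trans:
  assumes "Well_order r" and "k \<in> underS r j" and "j \<in> underS r i"
  shows "k \<in> underS r i"
proof -
  have "trans r" "antisym r" using assms(1) by (simp_all add: wo_rel.TRANS wo_rel.ANTISYM wo_rel_def)
  moreover have "(j, i) \<in> r" using assms(3) unfolding underS_def by simp
  ultimately show ?thesis using underS_incr[of r j i] assms(2) by blast
qed

lemma Well_order_underS_total:
  assumes "Well_order r" and "j \<in> Field r" and "k \<in> Field r"
  shows "j = k \<or> j \<in> underS r k \<or> k \<in> underS r j"
  using assms wo_rel.TOTALS[of r] unfolding wo_rel_def underS_def by blast

lemma Well_order_pred_unique:
  assumes "Well_order r"
    and "j \<in> underS r i" "underS r i = insert j (underS r j)"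
    and "j' \<in> underS r i" "underS r i = insert j' (underS r j')"
  shows "j' = j"
proof (rule ccontr)
  assume "j' \<noteq> j"
  moreover have "j' \<in> insert j (underS r j)" "j \<in> insert j' (underS r j')"
    using assms(2-5) by simp_all
  ultimately have "j' \<in> underS r j" "j \<in> underS r j'" by simp_all
  then show False using Well_order_underS_trans[OF assms(1)] underS_notIn by metis
qed

lemma Well_order_limit_directed:
  assumes wo: "Well_order r" and limit: "\<not> (\<exists>j\<in>underS r i. underS r i = insert j (underS r j))"
    and "j1 \<in> underS r i" "j2 \<in> underS r i"
  shows "\<exists>m\<in>underS r i. j1 \<in> underS r m \<and> j2 \<in> underS r m"
proof -
  have above: "\<exists>m\<in>underS r i. k \<in> underS r m" if k: "k \<in> underS r i" for k
  proof (rule ccontr)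
    assume none: "\<not> ?thesis"
    have "underS r i \<subseteq> insert k (underS r k)"
    proof
      fix m assume m: "m \<in> underS r i"
      then have "m = k \<or> m \<in> underS r k \<or> k \<in> underS r m"
        using Well_order_underS_total[OF wo] k underS_Field by fast
      then show "m \<in> insert k (underS r k)" using none m by blast
    qed
    moreover have "insert k (underS r k) \<subseteq> underS r i"
      using k Well_order_underS_trans[OF wo _ k] by blast
    ultimately show False using limit k by blast
  qed
  have "j1 = j2 \<or> j1 \<in> underS r j2 \<or> j2 \<in> underS r j1"
    using Well_order_underS_total[OF wo] assms(3,4) underS_Field by fast
  then show ?thesis
    using above[OF assms(3)] above[OF assms(4)] Well_order_underS_trans[OF wo] by blast
qed

lemma hier_unfold: "Well_order r \<Longrightarrow> hier r L \<phi> i = hier_step r L \<phi> (cut (hier r L \<phi>) (r - Id) i) i"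
  unfolding hier_def by (rule wfrec) (simp add: well_order_on_def)

lemma cut_underS: "j \<in> underS r i \<Longrightarrow> cut f (r - Id) i j = f j"
  by (simp add: cut_apply underS_def)

lemma hier_initial: "Well_order r \<Longrightarrow> underS r i = {} \<Longrightarrow> hier r L \<phi> i = initial_stage L \<phi>"
  by (subst hier_unfold) (simp_all add: hier_step_def initial_stage_def)

lemma hier_succ:
  assumes wo: "Well_order r" and j: "j \<in> underS r i" "underS r i = insert j (underS r j)"
  shows "hier r L \<phi> i = succ_stage (hier r L \<phi> j)"
proof -
  let ?pred = "SOME j. j \<in> underS r i \<and> underS r i = insert j (underS r j)"
  have "?pred \<in> underS r i \<and> underS r i = insert ?pred (underS r ?pred)"
    by (rule someI_ex) (use j in blast)
  then have "?pred = j" using Well_order_pred_unique[OF wo j] by blast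
  moreover have "underS r i \<noteq> {}" "\<exists>j\<in>underS r i. underS r i = insert j (underS r j)"
    using j by blast+
  ultimately show ?thesis
    by (subst hier_unfold[OF wo]) (simp add: hier_step_def succ_stage_def cut_underS[OF j(1)] Let_def)
qed

lemma union_stage_SOME:
  "union_stage J H
    \<lparr>PL = (\<Union>j\<in>J. PL (H j)), Pf = (\<lambda>c. Pf (H (SOME j. j \<in> J \<and> c \<in> PL (H j))) c),
     Pok = (\<forall>j\<in>J. Pok (H j)),
     SL = (\<Union>j\<in>J. SL (H j)), Sf = (\<lambda>c. Sf (H (SOME j. j \<in> J \<and> c \<in> SL (H j))) c),
     Sok = (\<forall>j\<in>J. Sok (H j))\<rparr>"
  unfolding union_stage_def by (auto intro: someI2_ex)

lemma union_stage_cong: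
  "union_stage J F t \<Longrightarrow> (\<And>j. j \<in> J \<Longrightarrow> F j = G j) \<Longrightarrow> union_stage J G t"
  unfolding union_stage_def by simp

lemma hier_limit:
  assumes wo: "Well_order r" and "underS r i \<noteq> {}"
    and "\<not> (\<exists>j\<in>underS r i. underS r i = insert j (underS r j))"
  shows "union_stage (underS r i) (hier r L \<phi>) (hier r L \<phi> i)"
proof (rule union_stage_cong)
  show "union_stage (underS r i) (cut (hier r L \<phi>) (r - Id) i) (hier r L \<phi> i)"
    using union_stage_SOME[of "underS r i" "cut (hier r L \<phi>) (r - Id) i"] assms(2,3)
    by (subst hier_unfold[OF wo]) (simp add: hier_step_def)
qed (rule cut_underS)

lemma hier_stage_between:
  fixes L C :: "'v::lattice set" and \<phi> \<psi> :: "'v \<Rightarrow> 'e::ordered_ab_group_add" and r :: "'i rel"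
  assumes wo: "Well_order r" and sd: "sigma_distributive TYPE('v)" and rc: "R_complete TYPE('e)"
    and slL: "sublattice L" and val: "valuation C \<psi>" and ext: "extends C \<psi> L \<phi>" and cpl: "complete C \<psi>"
  shows "stage_between L C \<psi> (hier r L \<phi> i) \<and>
    (\<forall>k\<in>underS r i. stage_precedes \<psi> (hier r L \<phi> k) (hier r L \<phi> i))"
  using wo_rel.WF[of r, unfolded wo_rel_def, OF wo]
proof (induction i rule: wf_induct_rule)
  case (less i)
  let ?H = "hier r L \<phi>"
  have IH: "stage_between L C \<psi> (?H j) \<and> (\<forall>k\<in>underS r j. stage_precedes \<psi> (?H k) (?H j))"
    if "j \<in> underS r i" for j
    using less that by (simp add: underS_def)
  consider (initial) "underS r i = {}"
    | (succ) j where "j \<in> underS r i" "underS r i = insert j (underS r j)"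
    | (limit) "underS r i \<noteq> {}" "\<not> (\<exists>j\<in>underS r i. underS r i = insert j (underS r j))"
    by blast
  then show ?case
  proof cases
    case initial
    then show ?thesis
      using hier_initial[OF wo initial, of L \<phi>] initial_stage_between[OF slL ext] by simp
  next
    case (succ j)
    have j: "stage_between L C \<psi> (?H j)" using IH succ(1) by blast
    note step = succ_stage_between[OF sd rc val cpl j]
    have "stage_precedes \<psi> (?H k) (succ_stage (?H j))" if "k \<in> underS r i" for k
    proof (cases "k = j")
      case False
      then have "stage_precedes \<psi> (?H k) (?H j)" using that succ IH by blast
      then show ?thesis by (rule stage_precedes_succ_stage[OF j])
    qed (use step(2) in simp)
    then show ?thesis using step(1) hier_succ[OF wo succ, of L \<phi>] by simp
  next
    case limit
    have "\<exists>m\<in>underS r i. stage_precedes \<psi> (?H j1) (?H m) \<and> stage_precedes \<psi> (?H j2) (?H m)"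
      if "j1 \<in> underS r i" "j2 \<in> underS r i" for j1 j2
      using Well_order_limit_directed[OF wo limit(2) that] IH by blast
    then show ?thesis
      using union_stage_between(1,2)[OF limit(1) hier_limit[OF wo limit]] IH by blast
  qed
qed

lemma complete_extension_extends_Pi_level:
  fixes L C :: "'v::lattice set" and \<phi> \<psi> :: "'v \<Rightarrow> 'e::ordered_ab_group_add" and r :: "'i rel"
  assumes "Well_order r" "sigma_distributive TYPE('v)" "R_complete TYPE('e)"
    and "sublattice L" and "valuation C \<psi>" and "extends C \<psi> L \<phi>" and "complete C \<psi>"
  shows "Pi_level_extendible r i L \<phi>" and "sublattice (Pi_level_L r i L \<phi>)"
    and "L \<subseteq> Pi_level_L r i L \<phi>" and "extends C \<psi> (Pi_level_L r i L \<phi>) (Pi_level_fun r i L \<phi>)"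
  using hier_stage_between[OF assms, of i]
  unfolding stage_between_def extends_def Pi_level_extendible_def Pi_level_L_def Pi_level_fun_def
  by auto

section \<open>The first uncountable stage\<close>

lemma uncountable_UNIV_set:
  assumes "infinite (UNIV :: 'a set)"
  shows "uncountable (UNIV :: 'a set set)"
proof
  define F :: "nat \<Rightarrow> 'a set" where "F = from_nat_into UNIV"
  assume "countable (UNIV :: 'a set set)"
  then have F: "range F = UNIV"
    unfolding F_def by (simp add: range_from_nat_into)
  obtain g :: "nat \<Rightarrow> 'a" where "inj g"
    using infinite_countable_subset[OF assms] by blast
  have "g ` {n. g n \<notin> F n} \<in> range F"
    unfolding F by simp
  then obtain k where k: "F k = g ` {n. g n \<notin> F n}"
    by (metis rangeE)
  have "g k \<in> F k \<longleftrightarrow> k \<in> {n. g n \<notin> F n}"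
    unfolding k by (rule inj_image_mem_iff[OF \<open>inj g\<close>])
  then show False by simp
qed
lemma Well_order_add_top:
  fixes r :: "'a rel"
  assumes wo: "Well_order r" and t: "t \<notin> Field r"
  defines "r' \<equiv> insert (t, t) r \<union> Field r \<times> {t}"
  shows "Well_order r'" and "underS r' t = Field r"
proof -
  have "r \<subseteq> Field r \<times> Field r" "refl_on (Field r) r" "trans r" "antisym r" "total_on (Field r) r"
    "wf (r - Id)"
    using wo unfolding order_on_defs by auto
  moreover have F: "Field r' = insert t (Field r)"
    unfolding r'_def by (auto simp: Field_def)
  moreover have "wf (r' - Id)"
  proof -
    have "wf (Field r \<times> {t})"
      unfolding wf_eq_minimal
    proof (intro allI impI)
      fix x :: 'a and Q assume "x \<in> Q"
      show "\<exists>z\<in>Q. \<forall>y. (y, z) \<in> Field r \<times> {t} \<longrightarrow> y \<notin> Q"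
      proof (cases "\<exists>y\<in>Q. y \<noteq> t")
        case True
        then show ?thesis by blast
      next
        case False
        then show ?thesis using \<open>x \<in> Q\<close> t by (intro bexI[of _ x]) force+
      qed
    qed
    moreover have "r' - Id = (r - Id) \<union> Field r \<times> {t}"
      using t unfolding r'_def by auto
    moreover have "Domain (r - Id) \<inter> Range (Field r \<times> {t}) = {}"
      using t by (auto intro: FieldI1)
    ultimately show ?thesis
      using \<open>wf (r - Id)\<close> wf_Un by metis
  qed
  moreover have "r' \<subseteq> Field r' \<times> Field r'"
    by (auto intro: FieldI1 FieldI2)
  moreover have "refl_on (Field r') r'"
    using \<open>refl_on (Field r) r\<close> unfolding F refl_on_def by (simp add: r'_def)
  moreover have "trans r'"
    using \<open>trans r\<close> t unfolding trans_def r'_def by (auto intro: FieldI1 FieldI2)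
  moreover have "antisym r'"
    using \<open>antisym r\<close> t unfolding antisym_def r'_def by (auto intro: FieldI1 FieldI2)
  moreover have "total_on (Field r') r'"
    using \<open>total_on (Field r) r\<close> unfolding F total_on_def by (simp add: r'_def) blast
  ultimately show "Well_order r'"
    unfolding order_on_defs by blast
  show "underS r' t = Field r"
    using t unfolding r'_def underS_def by (auto intro: FieldI1 FieldI2)
qed
lemma ex_Well_order_omega1:
  assumes "uncountable (UNIV :: 'a set)"
  obtains r :: "'a rel" and \<xi> where "Well_order r" "\<xi> \<in> Field r"
    "uncountable (underS r \<xi>)" "\<forall>j\<in>underS r \<xi>. countable (underS r j)"
proof -
  fix t :: 'a
  obtain r0 where "well_order_on (- {t}) r0" using well_order_on by blast
  then have wo0: "Well_order r0" and F0: "Field r0 = - {t}"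
    using well_order_on_Well_order by blast+
  define r where "r = insert (t, t) r0 \<union> Field r0 \<times> {t}"
  have wo: "Well_order r" and "underS r t = - {t}"
    using Well_order_add_top[OF wo0] F0 unfolding r_def by auto
  then have t: "t \<in> {x. uncountable (underS r x)}"
    using assms uncountable_minus_countable[of UNIV "{t}"] by (simp add: Compl_eq_Diff_UNIV)
  obtain \<xi> where \<xi>: "\<xi> \<in> {x. uncountable (underS r x)}"
    and min: "\<And>j. (j, \<xi>) \<in> r - Id \<Longrightarrow> j \<notin> {x. uncountable (underS r x)}"
    by (rule wfE_min[OF wo_rel.WF[of r, unfolded wo_rel_def, OF wo] t]) blast
  then obtain j0 where "j0 \<in> underS r \<xi>"
    by fastforce
  then have "\<xi> \<in> Field r"
    unfolding underS_def by (blast intro: FieldI2)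
  moreover have "\<forall>j\<in>underS r \<xi>. countable (underS r j)"
    using min by (simp add: underS_def)
  ultimately show thesis
    using \<xi> by (intro that[OF wo]) simp_all
qed

lemma omega1_bounds_sequences:
  fixes f :: "nat \<Rightarrow> 'a"
  assumes wo: "Well_order r" and unc: "uncountable (underS r \<xi>)"
    and cnt: "\<forall>j\<in>underS r \<xi>. countable (underS r j)" and f: "\<forall>n. f n \<in> underS r \<xi>"
  shows "\<exists>m\<in>underS r \<xi>. \<forall>n. f n \<in> underS r m"
proof -
  define U where "U = (\<Union>n. insert (f n) (underS r (f n)))"
  have "countable U" unfolding U_def using cnt f by (intro countable_UN) auto
  then have "underS r \<xi> - U \<noteq> {}"
    using uncountable_minus_countable[OF unc \<open>countable U\<close>] by (metis countable_empty)
  then obtain m where m: "m \<in> underS r \<xi>" "m \<notin> U" by blast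
  have "f n \<in> underS r m" for n
  proof -
    have "f n = m \<or> f n \<in> underS r m \<or> m \<in> underS r (f n)"
      using Well_order_underS_total[OF wo] f m(1) unfolding underS_def by (blast intro: FieldI1)
    moreover have "f n \<noteq> m" "m \<notin> underS r (f n)" using m(2) unfolding U_def by blast+
    ultimately show ?thesis by blast
  qed
  then show ?thesis using m(1) by blast
qed

lemma Pi_level_complete_at_omega1:
  fixes L C :: "'v::lattice set" and \<phi> \<psi> :: "'v \<Rightarrow> 'e::ordered_ab_group_add" and r :: "'i rel"
  assumes wo: "Well_order r" and sd: "sigma_distributive TYPE('v)" and rc: "R_complete TYPE('e)"
    and slL: "sublattice L" and val: "valuation C \<psi>" and ext: "extends C \<psi> L \<phi>" and cpl: "complete C \<psi>"
    and unc: "uncountable (underS r \<xi>)" and cnt: "\<forall>j\<in>underS r \<xi>. countable (underS r j)"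
  shows "complete (Pi_level_L r \<xi> L \<phi>) \<psi>"
proof -
  let ?H = "hier r L \<phi>"
  note stages = hier_stage_between[OF wo sd rc slL val ext cpl]
  have ne: "underS r \<xi> \<noteq> {}" using unc by auto
  have "\<not> (\<exists>j\<in>underS r \<xi>. underS r \<xi> = insert j (underS r j))"
    using unc cnt by (metis countable_insert)
  note limit = hier_limit[OF wo ne this, of L \<phi>]
  have bounded: "\<exists>m\<in>underS r \<xi>. \<forall>n. stage_precedes \<psi> (?H (f n)) (?H m)"
    if f: "\<forall>n. f n \<in> underS r \<xi>" for f :: "nat \<Rightarrow> 'i"
  proof -
    obtain m where "m \<in> underS r \<xi>" "\<forall>n. f n \<in> underS r m"
      using omega1_bounds_sequences[OF wo unc cnt f] by blast
    then show ?thesis using stages[of m] by blast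
  qed
  have "\<forall>j\<in>underS r \<xi>. stage_between L C \<psi> (?H j)"
    using stages by blast
  from union_stage_complete[OF cpl ne limit this bounded]
  show ?thesis unfolding Pi_level_L_def .
qed

section \<open>Finite lattices\<close>

lemma antimono_finite_range_attains_min:
  fixes a :: "nat \<Rightarrow> 'a::order"
  assumes "finite (range a)" and "antimono a"
  obtains N where "\<And>n. a N \<le> a n"
proof -
  obtain N where min: "\<And>b. b \<in> range a \<Longrightarrow> b \<le> a N \<Longrightarrow> a N = b"
    using finite_has_minimal[OF assms(1)] by blast
  have "a N \<le> a n" for n
  proof -
    have "a (max n N) \<le> a N" using antimonoD[OF assms(2), of N "max n N"] by simp
    then have "a N = a (max n N)" by (rule min[OF rangeI])
    then show ?thesis using antimonoD[OF assms(2), of n "max n N"] by simp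
  qed
  then show thesis by (rule that)
qed

lemma mono_finite_range_attains_max:
  fixes a :: "nat \<Rightarrow> 'a::order"
  assumes "finite (range a)" and "mono a"
  obtains N where "\<And>n. a n \<le> a N"
proof -
  obtain N where max: "\<And>b. b \<in> range a \<Longrightarrow> a N \<le> b \<Longrightarrow> a N = b"
    using finite_has_maximal[OF assms(1)] by blast
  have "a n \<le> a N" for n
  proof -
    have "a N \<le> a (max n N)" using monoD[OF assms(2), of N "max n N"] by simp
    then have "a N = a (max n N)" by (rule max[OF rangeI])
    then show ?thesis using monoD[OF assms(2), of n "max n N"] by simp
  qed
  then show thesis by (rule that)
qed

lemma finite_valuation_complete:
  fixes L :: "'v::lattice set" and \<phi> :: "'v \<Rightarrow> 'e::ordered_ab_group_add"
  assumes fin: "finite (UNIV :: 'v set)" and val: "valuation L \<phi>"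
  shows "complete L \<phi>"
proof -
  have "finite (range a)" for a :: "nat \<Rightarrow> 'v"
    using fin by (rule finite_subset[rotated]) simp
  note mono\<phi> = val[unfolded valuation_def, THEN conjunct1, rule_format]
  have "Pi_complete L \<phi>" unfolding Pi_complete_def
  proof (intro allI impI)
    fix a assume a: "conv_dec L \<phi> a"
    then obtain N where N: "\<And>n. a N \<le> a n"
      using antimono_finite_range_attains_min[OF \<open>finite (range a)\<close>] unfolding conv_dec_def by blast
    have "is_inf_seq a (a N)" "is_inf_seq (\<lambda>n. \<phi> (a n)) (\<phi> (a N))"
      using a N mono\<phi> unfolding is_inf_seq_def conv_dec_def by blast+
    then show "inf_seq a \<in> L \<and> \<phi> (inf_seq a) = inf_seq (\<lambda>n. \<phi> (a n))"
      using a unfolding conv_dec_def by (simp add: is_inf_seq_unique)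
  qed
  moreover have "Sigma_complete L \<phi>" unfolding Sigma_complete_def
  proof (intro allI impI)
    fix a assume a: "conv_inc L \<phi> a"
    then obtain N where N: "\<And>n. a n \<le> a N"
      using mono_finite_range_attains_max[OF \<open>finite (range a)\<close>] unfolding conv_inc_def by blast
    have "is_sup_seq a (a N)" "is_sup_seq (\<lambda>n. \<phi> (a n)) (\<phi> (a N))"
      using a N mono\<phi> unfolding is_sup_seq_def conv_inc_def by blast+
    then show "sup_seq a \<in> L \<and> \<phi> (sup_seq a) = sup_seq (\<lambda>n. \<phi> (a n))"
      using a unfolding conv_inc_def by (simp add: is_sup_seq_unique)
  qed
  ultimately show ?thesis unfolding complete_def ..
qed

lemma ex_complete_Pi_level:
  fixes L C :: "'v::lattice set" and \<phi> \<psi> :: "'v \<Rightarrow> 'e::ordered_ab_group_add"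
  assumes sd: "sigma_distributive TYPE('v)" and rc: "R_complete TYPE('e)"
    and slL: "sublattice L" and val: "valuation C \<psi>" and ext: "extends C \<psi> L \<phi>" and cpl: "complete C \<psi>"
  obtains r :: "'v set rel" and \<xi> where "Well_order r" "\<xi> \<in> Field r" "complete (Pi_level_L r \<xi> L \<phi>) \<psi>"
proof (cases "finite (UNIV :: 'v set)")
  case True
  define r :: "'v set rel" where "r = {({}, {})}"
  have wo: "Well_order r"
    unfolding r_def by (simp add: order_on_defs refl_on_def trans_def antisym_def total_on_def Field_def)
  have "underS r {} = {}"
    unfolding r_def underS_def by simp
  then have "Pi_level_L r {} L \<phi> = L"
    using hier_initial[OF wo, of "{}" L \<phi>] by (simp add: Pi_level_L_def initial_stage_def)
  moreover have "complete L \<psi>"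
    using finite_valuation_complete[OF True valuation_subset[OF val]] ext by (simp add: extends_def)
  moreover have "{} \<in> Field r"
    unfolding r_def Field_def by simp
  ultimately show thesis
    using that[OF wo] by simp
next
  case False
  then obtain r :: "'v set rel" and \<xi> where wo: "Well_order r" and "\<xi> \<in> Field r"
    and unc: "uncountable (underS r \<xi>)" and cnt: "\<forall>j\<in>underS r \<xi>. countable (underS r j)"
    using ex_Well_order_omega1[OF uncountable_UNIV_set] by metis
  then show thesis
    using that Pi_level_complete_at_omega1[OF wo sd rc slL val ext cpl unc cnt] by blast
qed

theorem proposition5p8:
  fixes L C :: "'v::lattice set"
    and \<phi> \<psi> :: "'v \<Rightarrow> 'e::ordered_ab_group_add"
  assumes "valuation_system L \<phi>"
    and "sublattice C" and "valuation C \<psi>" and "extends C \<psi> L \<phi>" and "complete C \<psi>"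
  shows "\<exists>Lb \<phi>b. sublattice Lb \<and> valuation Lb \<phi>b \<and> extends Lb \<phi>b L \<phi> \<and> complete Lb \<phi>b \<and>
           (\<forall>C' \<psi>'. sublattice C' \<and> valuation C' \<psi>' \<and> extends C' \<psi>' L \<phi> \<and> complete C' \<psi>'
                \<longrightarrow> extends C' \<psi>' Lb \<phi>b) \<and>
           (\<exists>(r :: 'v set rel) \<xi>. Well_order r \<and> \<xi> \<in> Field r \<and>
                Pi_level_extendible r \<xi> L \<phi> \<and> Pi_level_L r \<xi> L \<phi> = Lb \<and>
                (\<forall>c\<in>Lb. Pi_level_fun r \<xi> L \<phi> c = \<phi>b c))"
proof -
  have sd: "sigma_distributive TYPE('v)" and rc: "R_complete TYPE('e)" and slL: "sublattice L"
    using assms(1) unfolding valuation_system_def by simp_all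
  obtain r :: "'v set rel" and \<xi> where wo: "Well_order r" and "\<xi> \<in> Field r"
    and "complete (Pi_level_L r \<xi> L \<phi>) \<psi>"
    using ex_complete_Pi_level[OF sd rc slL assms(3-5)] by blast
  let ?Lb = "Pi_level_L r \<xi> L \<phi>"
  note level = complete_extension_extends_Pi_level[OF wo sd rc slL, of _ _ \<phi> \<xi>]
  note level_C = level[OF assms(3-5)]
  have "extends C' \<psi>' ?Lb \<psi>"
    if "valuation C' \<psi>'" "extends C' \<psi>' L \<phi>" "complete C' \<psi>'" for C' \<psi>'
    using level(4)[OF that] level_C(4) unfolding extends_def by auto
  moreover have "valuation ?Lb \<psi>" "extends ?Lb \<psi> L \<phi>"
    using valuation_subset[OF assms(3)] level_C(3,4) assms(4) unfolding extends_def by auto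
  moreover have "\<forall>c\<in>?Lb. Pi_level_fun r \<xi> L \<phi> c = \<psi> c"
    using level_C(4) unfolding extends_def by auto
  ultimately show ?thesis
    using level_C(1,2) wo \<open>\<xi> \<in> Field r\<close> \<open>complete ?Lb \<psi>\<close> by blast
qed

end
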